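(* Consider the system $$\begin{bmatrix}\dot q\\ \dot p\end{bmatrix}=J\begin{bmatrix}\frac{\partial H}{\partial q}(q,p)\\ \frac{\partial H}{\partial p}(q,p)\end{bmatrix},\qquad J=\begin{bmatrix}0 & B_s^T\\ -B_s & -B_dRB_d^T\end{bmatrix},\quad (q,p)\in\mathbb{R}^{M_s}\times\mathbb{R}^{N}.$$ A differentiable function $C(q,p)$ is a Casimir function, i.e. $\begin{bmatrix}\frac{\partial^T C}{\partial q}(q,p) & \frac{\partial^T C}{\partial p}(q,p)\end{bmatrix}J=0$ for all $(q,p)$, if and only if for all $(q,p)$ $$\tfrac{\partial C}{\partial p}(q,p)\in\operatorname{span}\mathbb{1},\qquad \tfrac{\partial C}{\partial q}(q,p)\in\ker B_s.$$
   Context: Mass-spring-damper setting: a directed graph with $N$ vertices whose edges are split into $M_s$ spring edges and $M_d$ damper edges; its incidence matrix is $B=[B_s\ B_d]$ ($N\times(M_s+M_d)$, entry $1$ if the edge originates at the vertex, $-1$ if it points towards it, $0$ otherwise). Standing assumption: the graph is connected, equivalently $\ker B_s^T\cap\ker B_d^T=\operatorname{span}\mathbb{1}$, $\mathbb{1}\in\mathbb{R}^N$ the all-ones vector. $R$ is the $M_d\times M_d$ diagonal matrix of positive damping constants. $\frac{\partial C}{\partial q}$ denotes the column gradient and $\frac{\partial^T C}{\partial q}$ the row gradient. *)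

theory Defs
  imports "HOL-Analysis.Analysis"
begin

text \<open>Incidence matrix of a directed graph (vertices indexed by 'n, edges by 'e):
  every column (edge) has exactly one entry 1 (origin), one entry -1 (target), all
  other entries 0.\<close>
definition incidence_matrix :: "real^'e^'n \<Rightarrow> bool" where
  "incidence_matrix B \<longleftrightarrow>
     (\<forall>j. \<exists>u v. u \<noteq> v \<and> B $ u $ j = 1 \<and> B $ v $ j = -1 \<and>
               (\<forall>w. w \<noteq> u \<and> w \<noteq> v \<longrightarrow> B $ w $ j = 0))"

definition grad_q :: "((real^'s) \<times> (real^'n) \<Rightarrow> real) \<Rightarrow> real^'s \<Rightarrow> real^'n \<Rightarrow> real^'s" where
  "grad_q C q p = (\<chi> i. frechet_derivative C (at (q, p)) (axis i 1, 0))"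

definition grad_p :: "((real^'s) \<times> (real^'n) \<Rightarrow> real) \<Rightarrow> real^'s \<Rightarrow> real^'n \<Rightarrow> real^'n" where
  "grad_p C q p = (\<chi> i. frechet_derivative C (at (q, p)) (0, axis i 1))"

text \<open>Casimir condition  [grad_q^T  grad_p^T] J = 0  with
  J = [[0, Bs^T], [-Bs, -Bd R Bd^T]], written out blockwise.\<close>
definition casimir ::
  "real^'s^'n \<Rightarrow> real^'d^'n \<Rightarrow> real^'d^'d \<Rightarrow> ((real^'s) \<times> (real^'n) \<Rightarrow> real) \<Rightarrow> bool" where
  "casimir Bs Bd R C \<longleftrightarrow>
     (\<forall>q p. - (grad_p C q p v* Bs) = 0 \<and>
            grad_q C q p v* transpose Bs - grad_p C q p v* (Bd ** R ** transpose Bd) = 0)"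

end

theory Submission
  imports Defs
begin

text \<open>Pairing the second block equation with \<open>\<partial>C/\<partial>p\<close> kills the spring term, because the
  first block equation says \<open>B\<^sub>s\<^sup>T \<partial>C/\<partial>p = 0\<close>; what remains is the damping quadratic form
  \<open>y\<^sup>T R y\<close> with \<open>y = B\<^sub>d\<^sup>T \<partial>C/\<partial>p\<close>, which vanishes only for \<open>y = 0\<close>. Hence \<open>\<partial>C/\<partial>p\<close> lies in
  \<open>ker B\<^sub>s\<^sup>T \<inter> ker B\<^sub>d\<^sup>T = span \<one>\<close>, the damping term drops out, and \<open>B\<^sub>s \<partial>C/\<partial>q = 0\<close> is left.\<close>

lemma vector_matrix_mult_diagonal:
  fixes R :: "real^'d^'d"
  assumes "\<forall>i j. i \<noteq> j \<longrightarrow> R $ i $ j = 0"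
  shows "y v* R = (\<chi> i. R $ i $ i * y $ i)"
proof -
  have "(\<Sum>j\<in>UNIV. y $ j * R $ j $ i) = R $ i $ i * y $ i" for i
  proof -
    have "(\<Sum>j\<in>UNIV. y $ j * R $ j $ i) = (\<Sum>j\<in>UNIV. if j = i then R $ i $ i * y $ i else 0)"
      by (rule sum.cong) (auto simp: assms)
    then show ?thesis by simp
  qed
  then show ?thesis
    unfolding vector_matrix_mult_def by (simp add: vec_eq_iff)
qed

lemma diagonal_pos_quadratic_form_eq_0_imp:
  fixes R :: "real^'d^'d"
  assumes "\<forall>i j. i \<noteq> j \<longrightarrow> R $ i $ j = 0" and pos: "\<forall>i. R $ i $ i > 0"
    and "y \<bullet> (y v* R) = 0"
  shows "y = 0"
proof -
  have "(\<Sum>i\<in>UNIV. R $ i $ i * (y $ i)\<^sup>2) = 0"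
    using assms(3) by (simp add: vector_matrix_mult_diagonal[OF assms(1)]
        inner_vec_def power2_eq_square mult_ac)
  then have "\<forall>i. R $ i $ i * (y $ i)\<^sup>2 = 0"
    using pos by (simp add: sum_nonneg_eq_0_iff less_imp_le)
  then show "y = 0"
    using pos by (simp add: vec_eq_iff) (metis less_irrefl)
qed

lemma inner_vector_matrix_mult_congruence:
  fixes g :: "real^'n" and B :: "real^'d^'n" and R :: "real^'d^'d"
  shows "g \<bullet> (g v* (B ** R ** transpose B)) = (g v* B) \<bullet> ((g v* B) v* R)"
proof -
  have "g v* (B ** R ** transpose B) = B *v ((g v* B) v* R)"
  proof -
    have "g v* (B ** R ** transpose B) = ((g v* B) v* R) v* transpose B"
      by (simp only: vector_matrix_mul_assoc)
    also have "\<dots> = B *v ((g v* B) v* R)"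
      by (rule vector_transpose_matrix)
    finally show ?thesis .
  qed
  then show ?thesis
    by (simp add: dot_lmul_matrix)
qed

lemma casimir_pointwise_iff:
  fixes Bs :: "real^'s^'n" and Bd :: "real^'d^'n" and R :: "real^'d^'d"
    and g :: "real^'n" and h :: "real^'s"
  assumes ker: "{x. transpose Bs *v x = 0} \<inter> {x. transpose Bd *v x = 0} = span {vec 1}"
    and diag: "\<forall>i j. i \<noteq> j \<longrightarrow> R $ i $ j = 0" and pos: "\<forall>i. R $ i $ i > 0"
  shows "(- (g v* Bs) = 0 \<and> h v* transpose Bs - g v* (Bd ** R ** transpose Bd) = 0)
     \<longleftrightarrow> (g \<in> span {vec 1} \<and> Bs *v h = 0)"
proof
  assume "- (g v* Bs) = 0 \<and> h v* transpose Bs - g v* (Bd ** R ** transpose Bd) = 0"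
  then have gBs: "g v* Bs = 0" and balance: "Bs *v h = g v* (Bd ** R ** transpose Bd)"
    by simp_all
  have "g \<bullet> (Bs *v h) = (g v* Bs) \<bullet> h"
    by (simp add: dot_lmul_matrix)
  with gBs have "g \<bullet> (Bs *v h) = 0"
    by simp
  then have "(g v* Bd) \<bullet> ((g v* Bd) v* R) = 0"
    using balance by (simp add: inner_vector_matrix_mult_congruence)
  then have gBd: "g v* Bd = 0"
    using diagonal_pos_quadratic_form_eq_0_imp[OF diag pos] by blast
  with gBs ker show "g \<in> span {vec 1} \<and> Bs *v h = 0"
    using balance by (auto simp: vector_matrix_mul_assoc[symmetric])
next
  assume "g \<in> span {vec 1} \<and> Bs *v h = 0"
  moreover from this ker have "g v* Bs = 0" "g v* Bd = 0"
    by auto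
  ultimately show "- (g v* Bs) = 0 \<and> h v* transpose Bs - g v* (Bd ** R ** transpose Bd) = 0"
    by (simp add: vector_matrix_mul_assoc[symmetric])
qed

theorem proposition4p2:
  fixes Bs :: "real^'s^'n" and Bd :: "real^'d^'n" and R :: "real^'d^'d"
    and C :: "(real^'s) \<times> (real^'n) \<Rightarrow> real"
  assumes "incidence_matrix Bs" and "incidence_matrix Bd"
    and "{x. transpose Bs *v x = 0} \<inter> {x. transpose Bd *v x = 0} = span {vec 1}"
    and "\<forall>i j. i \<noteq> j \<longrightarrow> R $ i $ j = 0" and "\<forall>i. R $ i $ i > 0"
    and "\<forall>x. C differentiable (at x)"
  shows "casimir Bs Bd R C \<longleftrightarrow>
         (\<forall>q p. grad_p C q p \<in> span {vec 1} \<and> Bs *v grad_q C q p = 0)"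
  \<comment> \<open>Only the kernel condition and positivity of \<open>R\<close> matter: the equivalence holds pointwise
    for arbitrary gradient values, so the incidence structure and differentiability go unused.\<close>
  unfolding casimir_def using casimir_pointwise_iff[OF assms(3-5)] by blast

end
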